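(* Let $\beta>2$, $r_{\mathrm e}\ge0$, $\theta_{\mathrm e}\in[0,2\pi)$, and let $F_\beta(\mathbf{x},r)$, $p_\beta,q_\beta$, $\mathbf{m}_i^\beta$, $\boldsymbol{\sigma}_i^\beta$ be as in the context. Let $\epsilon>0$ and let $\mathbf{m}_i^\beta(\cdot),\boldsymbol{\sigma}_i^\beta(\cdot):[0,\epsilon)\to\mathbb{R}^2$, $0\le i\le 2$, be smooth maps with $\mathbf{m}_i^\beta(0)=\mathbf{m}_i^\beta$, $\boldsymbol{\sigma}_i^\beta(0)=\boldsymbol{\sigma}_i^\beta$, such that $\mathbf{m}_i^\beta(r)$ and $\boldsymbol{\sigma}_i^\beta(r)$ are critical points of $F_\beta(\cdot,r)$ for every $r\in[0,\epsilon)$ (such maps exist by the implicit function theorem). Let $\phi_i^\beta(r)=F_\beta(\mathbf{m}_i^\beta(r),r)$ and $\psi_i^\beta(r)=F_\beta(\boldsymbol{\sigma}_i^\beta(r),r)$. Then for $0\le i\le2$, $$\frac{d\phi_i^\beta}{dr}(0)=(3p_\beta-1)\cos\Big(\theta_{\mathrm e}-\frac{2\pi i}{3}\Big),\qquad \frac{d\psi_i^\beta}{dr}(0)=(3q_\beta-1)\cos\Big(\theta_{\mathrm e}-\frac{2\pi i}{3}\Big).$$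
   Context: $\Xi=\{(x_1,x_2): x_1,x_2\ge0,\ x_1+x_2\le1\}$, $x_0=1-x_1-x_2$, $\mathbf{v}_k=(\cos(2\pi k/3),\sin(2\pi k/3))$, and $$F_\beta(\mathbf{x},r)=-\frac12\Big|\sum_{k=0}^2x_k\mathbf{v}_k\Big|^2+\frac1\beta\sum_{k=0}^2x_k\log(3x_k)-r\sum_{i=0}^2x_i\cos\Big(\theta_{\mathrm e}-\frac{2\pi i}{3}\Big),$$ the potential of the mean-field Potts model with external field of magnitude $r$ and angle $\theta_{\mathrm e}$. Let $f_0(t)=\frac{2}{3(1-3t)}\log\frac{1-2t}{t}$ on $(0,1/2)\setminus\{1/3\}$, $f_0(1/3)=2$; for $\beta>2$ the equation $f_0(t)=\beta$ has exactly two solutions $p_\beta<q_\beta$ in $(0,1/2)$, with $p_\beta<1/3<q_\beta$. Set $\mathbf{m}_0^\beta=(p_\beta,p_\beta)$, $\mathbf{m}_1^\beta=(1-2p_\beta,p_\beta)$, $\mathbf{m}_2^\beta=(p_\beta,1-2p_\beta)$, $\boldsymbol{\sigma}_0^\beta=(q_\beta,q_\beta)$, $\boldsymbol{\sigma}_1^\beta=(1-2q_\beta,q_\beta)$, $\boldsymbol{\sigma}_2^\beta=(q_\beta,1-2q_\beta)$; these are nondegenerate critical points of $F_\beta(\cdot,0)$. *)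

theory Defs
  imports "HOL-Analysis.Analysis"
begin

text \<open>Barycentric coordinates: x = (x1,x2), x0 = 1 - x1 - x2.\<close>
definition xcoord :: "real \<times> real \<Rightarrow> nat \<Rightarrow> real" where
  "xcoord x k = (if k = 0 then 1 - fst x - snd x else if k = 1 then fst x else snd x)"

definition F_potts :: "real \<Rightarrow> real \<Rightarrow> real \<times> real \<Rightarrow> real \<Rightarrow> real" where
  "F_potts \<beta> \<theta> x r =
     - (1/2) * ((\<Sum>k\<le>2. xcoord x k * cos (2*pi*real k/3))\<^sup>2
               + (\<Sum>k\<le>2. xcoord x k * sin (2*pi*real k/3))\<^sup>2)
     + (1/\<beta>) * (\<Sum>k\<le>2. xcoord x k * ln (3 * xcoord x k))
     - r * (\<Sum>i\<le>2. xcoord x i * cos (\<theta> - 2*pi*real i/3))"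

definition f0 :: "real \<Rightarrow> real" where
  "f0 t = (if t = 1/3 then 2 else 2 / (3 * (1 - 3*t)) * ln ((1 - 2*t) / t))"

definition simplex_interior :: "(real \<times> real) set" where
  "simplex_interior = {x. 0 < fst x \<and> 0 < snd x \<and> fst x + snd x < 1}"

definition critical_point :: "real \<Rightarrow> real \<Rightarrow> real \<Rightarrow> real \<times> real \<Rightarrow> bool" where
  "critical_point \<beta> \<theta> r x \<longleftrightarrow> x \<in> simplex_interior \<and>
     ((\<lambda>y. F_potts \<beta> \<theta> y r) has_derivative (\<lambda>h. 0)) (at x)"

definition smooth_on :: "real set \<Rightarrow> (real \<Rightarrow> real \<times> real) \<Rightarrow> bool" where
  "smooth_on S f \<longleftrightarrow> (\<exists>D :: nat \<Rightarrow> real \<Rightarrow> real \<times> real. D 0 = f \<and>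
     (\<forall>k. \<forall>t\<in>S. (D k has_vector_derivative D (Suc k) t) (at t within S)))"

definition m_pt :: "real \<Rightarrow> nat \<Rightarrow> real \<times> real" where
  "m_pt p i = (if i = 0 then (p, p) else if i = 1 then (1 - 2*p, p) else (p, 1 - 2*p))"

end

theory Submission
  imports Defs
begin

text \<open>Since the field enters F linearly, F(x,r) = F(x,0) - r L(x). Along a branch g of critical
  points the chain rule kills the contribution of F(\<cdot>,0) at r = 0 (envelope theorem), so the
  derivative is -L(g 0). At the symmetric point with coordinates p + (1-3p)[k=i], L evaluates to
  (1-3p) cos(\<theta> - 2\<pi>i/3), because the three cosines cos(\<theta> - 2\<pi>k/3) sum to zero.\<close>

definition field_coupling :: "real \<Rightarrow> real \<times> real \<Rightarrow> real" where
  "field_coupling \<theta> x = (\<Sum>i\<le>2. xcoord x i * cos (\<theta> - 2*pi*real i/3))"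

lemma F_potts_eq_field_coupling:
  "F_potts \<beta> \<theta> x r = F_potts \<beta> \<theta> x 0 - r * field_coupling \<theta> x"
  by (simp add: F_potts_def field_coupling_def)

lemma field_coupling_differentiable: "field_coupling \<theta> differentiable (at x)"
  unfolding field_coupling_def xcoord_def
  by (simp add: numeral_2_eq_2 atMost_Suc)
    (intro differentiable_add differentiable_mult differentiable_diff differentiable_const
      bounded_linear_imp_differentiable bounded_linear_fst bounded_linear_snd)

lemma sum_cos_third_turns: "(\<Sum>k\<le>2. cos (\<theta> - 2*pi*real k/3)) = 0"
proof -
  have "cos (2*pi*2/3) = -1/2" "sin (2*pi*2/3) = - sqrt 3/2"
    using cos_add[of "pi/3" pi] sin_add[of "pi/3" pi] by (simp_all add: cos_60 sin_60)
  then have "cos (\<theta> - 2*pi*2/3) = - cos \<theta> / 2 - sqrt 3 / 2 * sin \<theta>"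
    by (simp only: cos_diff) (simp add: algebra_simps)
  moreover have "cos (\<theta> - 2*pi/3) = - cos \<theta> / 2 + sqrt 3 / 2 * sin \<theta>"
    by (simp add: cos_diff cos_120 sin_120)
  ultimately show ?thesis
    by (simp add: numeral_2_eq_2 atMost_Suc)
qed

lemma xcoord_m_pt:
  assumes "i \<le> 2" "k \<le> 2"
  shows "xcoord (m_pt p i) k = p + (if k = i then 1 - 3*p else 0)"
  using assms by (auto simp: xcoord_def m_pt_def)

lemma field_coupling_m_pt:
  assumes "i \<le> 2"
  shows "field_coupling \<theta> (m_pt p i) = (1 - 3*p) * cos (\<theta> - 2*pi*real i/3)"
proof -
  have "field_coupling \<theta> (m_pt p i) =
      p * (\<Sum>k\<le>2. cos (\<theta> - 2*pi*real k/3))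
      + (\<Sum>k\<le>2. (if k = i then 1 - 3*p else 0) * cos (\<theta> - 2*pi*real k/3))"
    unfolding field_coupling_def sum_distrib_left sum.distrib[symmetric]
    by (intro sum.cong) (simp_all add: xcoord_m_pt assms distrib_right)
  also have "\<dots> = (1 - 3*p) * cos (\<theta> - 2*pi*real i/3)"
    using assms
    by (simp add: sum_cos_third_turns if_distrib[of "\<lambda>x. x * _"] sum.delta cong: if_cong)
  finally show ?thesis .
qed

lemma envelope_has_real_derivative:
  fixes G L :: "'a::real_normed_vector \<Rightarrow> real" and g :: "real \<Rightarrow> 'a"
  assumes G: "(G has_derivative (\<lambda>h. 0)) (at (g 0))"
    and g: "g differentiable (at 0 within S)"
    and L: "L differentiable (at (g 0))"
  shows "((\<lambda>r. G (g r) - r * L (g r)) has_real_derivative - L (g 0)) (at 0 within S)"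
proof -
  obtain g' where g': "(g has_derivative g') (at 0 within S)"
    using g by (auto simp: differentiable_def)
  obtain L' where L': "(L has_derivative L') (at (g 0))"
    using L by (auto simp: differentiable_def)
  have Gg: "((\<lambda>r. G (g r)) has_derivative (\<lambda>h. 0)) (at 0 within S)"
    using diff_chain_within[OF g' has_derivative_at_withinI[OF G]] by (simp add: o_def)
  have Lg: "((\<lambda>r. L (g r)) has_derivative (\<lambda>h. L' (g' h))) (at 0 within S)"
    using diff_chain_within[OF g' has_derivative_at_withinI[OF L']] by (simp add: o_def)
  have "((\<lambda>r. G (g r) - r * L (g r)) has_derivative
          (\<lambda>h. 0 - (0 * L' (g' h) + h * L (g 0)))) (at 0 within S)"
    by (intro has_derivative_diff has_derivative_mult Gg Lg has_derivative_ident)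
  then show ?thesis
    unfolding has_field_derivative_def
    by (rule has_derivative_eq_rhs) (simp add: fun_eq_iff)
qed

lemma smooth_on_differentiable:
  assumes "smooth_on S f" "t \<in> S"
  shows "f differentiable (at t within S)"
proof -
  obtain D where "D 0 = f" "\<forall>k. \<forall>t\<in>S. (D k has_vector_derivative D (Suc k) t) (at t within S)"
    using assms(1) unfolding smooth_on_def by blast
  with assms(2) show ?thesis
    by (metis differentiableI_vector)
qed

lemma critical_branch_has_real_derivative:
  assumes "smooth_on {0..<\<epsilon>} g" "\<epsilon> > 0" "critical_point \<beta> \<theta> 0 (g 0)"
  shows "((\<lambda>r. F_potts \<beta> \<theta> (g r) r) has_real_derivative - field_coupling \<theta> (g 0))
           (at 0 within {0..<\<epsilon>})"
proof -
  have "((\<lambda>y. F_potts \<beta> \<theta> y 0) has_derivative (\<lambda>h. 0)) (at (g 0))"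
    using assms(3) by (simp add: critical_point_def)
  moreover have "g differentiable (at 0 within {0..<\<epsilon>})"
    using assms(1,2) by (simp add: smooth_on_differentiable)
  ultimately have "((\<lambda>r. F_potts \<beta> \<theta> (g r) 0 - r * field_coupling \<theta> (g r)) has_real_derivative
      - field_coupling \<theta> (g 0)) (at 0 within {0..<\<epsilon>})"
    by (rule envelope_has_real_derivative[OF _ _ field_coupling_differentiable])
  moreover have "(\<lambda>r. F_potts \<beta> \<theta> (g r) r) = (\<lambda>r. F_potts \<beta> \<theta> (g r) 0 - r * field_coupling \<theta> (g r))"
    by (rule ext) (rule F_potts_eq_field_coupling)
  ultimately show ?thesis
    by simp
qed

theorem lemma5p1:
  fixes \<beta> \<theta> p q \<epsilon> :: real
    and m \<sigma> :: "nat \<Rightarrow> real \<Rightarrow> real \<times> real"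
  assumes "\<beta> > 2"
    and "0 \<le> \<theta>" "\<theta> < 2 * pi"
    and "0 < p" "p < q" "q < 1/2" "f0 p = \<beta>" "f0 q = \<beta>"
    and "\<epsilon> > 0"
    and "\<And>i. i \<le> 2 \<Longrightarrow> smooth_on {0..<\<epsilon>} (m i)"
    and "\<And>i. i \<le> 2 \<Longrightarrow> smooth_on {0..<\<epsilon>} (\<sigma> i)"
    and "\<And>i. i \<le> 2 \<Longrightarrow> m i 0 = m_pt p i"
    and "\<And>i. i \<le> 2 \<Longrightarrow> \<sigma> i 0 = m_pt q i"
    and "\<And>i r. i \<le> 2 \<Longrightarrow> r \<in> {0..<\<epsilon>} \<Longrightarrow> critical_point \<beta> \<theta> r (m i r)"
    and "\<And>i r. i \<le> 2 \<Longrightarrow> r \<in> {0..<\<epsilon>} \<Longrightarrow> critical_point \<beta> \<theta> r (\<sigma> i r)"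
    and "i \<le> 2"
  shows "((\<lambda>r. F_potts \<beta> \<theta> (m i r) r) has_real_derivative
            (3*p - 1) * cos (\<theta> - 2*pi*real i/3)) (at 0 within {0..<\<epsilon>}) \<and>
         ((\<lambda>r. F_potts \<beta> \<theta> (\<sigma> i r) r) has_real_derivative
            (3*q - 1) * cos (\<theta> - 2*pi*real i/3)) (at 0 within {0..<\<epsilon>})"
proof -
  have "0 \<in> {0..<\<epsilon>}" using \<open>\<epsilon> > 0\<close> by simp
  have slopes: "- field_coupling \<theta> (m i 0) = (3*p - 1) * cos (\<theta> - 2*pi*real i/3)"
    "- field_coupling \<theta> (\<sigma> i 0) = (3*q - 1) * cos (\<theta> - 2*pi*real i/3)"
    using assms(12,13) field_coupling_m_pt \<open>i \<le> 2\<close> by (simp_all add: algebra_simps)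
  show ?thesis
    unfolding slopes[symmetric]
    using assms(10,11,14,15) \<open>i \<le> 2\<close> \<open>0 \<in> {0..<\<epsilon>}\<close> \<open>\<epsilon> > 0\<close>
    by (simp add: critical_branch_has_real_derivative)
qed

end
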